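(* Let $(T(t))_{t\ge0}$ be a bounded $C_0$-semigroup on a Banach space $E$ that is norm continuous at infinity. Then for all $n\in\mathbb{N}$ and $t_1,\dots,t_n\ge0$, $$\ker(T(t_1)-\mathrm{Id})\cdots(T(t_n)-\mathrm{Id})=\ker(T(t_1)-\mathrm{Id})+\cdots+\ker(T(t_n)-\mathrm{Id}).$$
   Context: With $\omega_0=\omega_0(T)=\inf\{\omega\in\mathbb{R}:\exists M,\ \|T(t)\|\le Me^{\omega t}\ \forall t\ge0\}$ the growth bound, the semigroup is norm continuous at infinity if $\lim_{t\to\infty}\limsup_{h\downarrow0}\|e^{-\omega_0t}T(t)(\mathrm{Id}-e^{-\omega_0h}T(h))\|=0$. *)

theory Defs
  imports "HOL-Analysis.Analysis" "HOL-Library.Set_Algebras"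
begin

text \<open>A C0-semigroup on a (real) Banach space, given as a map from the
  time parameter to bounded linear operators (values for t < 0 are irrelevant).\<close>
definition C0_semigroup :: "(real \<Rightarrow> ('a::banach \<Rightarrow>\<^sub>L 'a)) \<Rightarrow> bool" where
  "C0_semigroup T \<longleftrightarrow>
     T 0 = id_blinfun \<and>
     (\<forall>s t. 0 \<le> s \<longrightarrow> 0 \<le> t \<longrightarrow> T (s + t) = T s o\<^sub>L T t) \<and>
     (\<forall>x. continuous_on {0..} (\<lambda>t. blinfun_apply (T t) x))"

definition bounded_semigroup :: "(real \<Rightarrow> ('a::real_normed_vector \<Rightarrow>\<^sub>L 'a)) \<Rightarrow> bool" where
  "bounded_semigroup T \<longleftrightarrow> (\<exists>M. \<forall>t\<ge>0. norm (T t) \<le> M)"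

text \<open>Growth bound, as an extended real (it may be \<open>-\<infinity>\<close>).\<close>
definition growth_bound :: "(real \<Rightarrow> ('a::real_normed_vector \<Rightarrow>\<^sub>L 'a)) \<Rightarrow> ereal" where
  "growth_bound T = Inf {ereal \<omega> | \<omega>. \<exists>M. \<forall>t\<ge>0. norm (T t) \<le> M * exp (\<omega> * t)}"

text \<open>Norm continuity at infinity: the defining formula requires a real growth bound.\<close>
definition norm_continuous_at_infinity :: "(real \<Rightarrow> ('a::real_normed_vector \<Rightarrow>\<^sub>L 'a)) \<Rightarrow> bool" where
  "norm_continuous_at_infinity T \<longleftrightarrow>
     (\<exists>\<omega>0::real. growth_bound T = ereal \<omega>0 \<and>
        ((\<lambda>t. Limsup (at_right 0) (\<lambda>h. ereal (norm
            (exp (- \<omega>0 * t) *\<^sub>R (T t o\<^sub>L (id_blinfun - exp (- \<omega>0 * h) *\<^sub>R T h))))))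
          \<longlongrightarrow> 0) at_top)"

definition ker :: "('a::real_normed_vector \<Rightarrow>\<^sub>L 'b::real_normed_vector) \<Rightarrow> 'a set" where
  "ker A = {x. blinfun_apply A x = 0}"

end

theory Submission
  imports Defs
begin

text \<open>
  By induction on \<open>n\<close> it suffices to show that if \<open>C\<close> is a product of factors
  \<open>T t\<^sub>i - id\<close> and \<open>y = C x\<close> satisfies \<open>T \<tau> y = y\<close>, then \<open>y = C z\<close> for some \<open>z\<close>
  with \<open>T \<tau> z = z\<close>; then \<open>x = (x - z) + z\<close>. If the growth bound is negative, such
  \<open>y\<close> vanish. If it is \<open>0\<close>, norm continuity at infinity makes \<open>T\<close> uniformly
  continuous on the \<open>\<tau>\<close>-periodic vectors, so their orbits have only finitely many
  nonzero Fourier coefficients and every periodic vector is a finite sum of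
  harmonics; uniqueness of Fourier coefficients is proved with the kernel
  \<open>((1 + cos)/2)\<^sup>N\<close>. A harmonic spans a plane on which \<open>T s\<close> is a rotation, so \<open>C\<close>
  acts there as multiplication by \<open>\<Prod>\<^sub>i (cis (\<omega> t\<^sub>i) - 1)\<close>. This can be inverted
  unless a factor vanishes, and then the harmonic is a fixed point of some \<open>T t\<^sub>i\<close>
  lying in the range of \<open>T t\<^sub>i - id\<close>, which is \<open>0\<close> because \<open>T\<close> is bounded.
\<close>

section \<open>Periodic functions and Fourier coefficients\<close>

lemma periodic_shift_multiple:
  fixes F :: "real \<Rightarrow> 'b"
  assumes periodic: "\<And>s. 0 \<le> s \<Longrightarrow> F (s + p) = F s" and "0 \<le> p" "0 \<le> s"
  shows "F (s + real m * p) = F s"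
proof (induction m)
  case (Suc m)
  have "F (s + real (Suc m) * p) = F ((s + real m * p) + p)" by (simp add: algebra_simps)
  also have "\<dots> = F (s + real m * p)" using periodic assms by simp
  finally show ?case using Suc by simp
qed simp

lemma integral_periodic_shift_le_period:
  fixes F :: "real \<Rightarrow> 'b::banach"
  assumes cont: "continuous_on {0..} F" and periodic: "\<And>s. 0 \<le> s \<Longrightarrow> F (s + p) = F s"
    and h: "0 \<le> h" "h \<le> p"
  shows "integral {0..p} (\<lambda>s. F (s + h)) = integral {0..p} F"
proof -
  have integrable: "\<And>a b. 0 \<le> a \<Longrightarrow> F integrable_on {a..b}"
    by (rule integrable_continuous_real, rule continuous_on_subset[OF cont]) auto
  have "integral {0..p} (\<lambda>s. F (s + h)) = integral {h..p+h} F"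
    using integral_shift_real_ivl[of h h "p+h" F] by (simp only: diff_self add_diff_cancel)
  also have "\<dots> = integral {h..p} F + integral {p..p+h} F"
    using Henstock_Kurzweil_Integration.integral_combine[where f=F and a=h and c=p and b="p+h"] integrable[of h "p+h"] h
    by simp
  also have "integral {p..p+h} F = integral {0..h} (\<lambda>s. F (s + p))"
    using integral_shift_real_ivl[of p p "p+h" F] by (simp only: diff_self add_diff_cancel_left')
  also have "\<dots> = integral {0..h} F"
    by (rule integral_cong) (use periodic in auto)
  also have "integral {h..p} F + integral {0..h} F = integral {0..p} F"
    using Henstock_Kurzweil_Integration.integral_combine[where f=F and a=0 and c=h and b=p] integrable[of 0 p] h
    by (simp add: add.commute)
  finally show ?thesis .
qed

lemma integral_periodic_shift:
  fixes F :: "real \<Rightarrow> 'b::banach"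
  assumes cont: "continuous_on {0..} F" and periodic: "\<And>s. 0 \<le> s \<Longrightarrow> F (s + p) = F s"
    and "0 \<le> h" "0 < p"
  shows "integral {0..p} (\<lambda>s. F (s + h)) = integral {0..p} F"
proof -
  define m where "m = nat \<lfloor>h / p\<rfloor>"
  define h0 where "h0 = h - real m * p"
  have m: "real m = of_int \<lfloor>h / p\<rfloor>" using assms unfolding m_def by simp
  have floor: "of_int \<lfloor>h / p\<rfloor> \<le> h / p" "h / p < of_int \<lfloor>h / p\<rfloor> + 1"
    by linarith+
  have "real m * p \<le> h" "h < (real m + 1) * p"
    using floor m \<open>0 < p\<close> by (metis pos_le_divide_eq, metis pos_divide_less_eq)
  then have h0: "0 \<le> h0" "h0 \<le> p" unfolding h0_def by (simp_all add: algebra_simps)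
  have "integral {0..p} (\<lambda>s. F (s + h)) = integral {0..p} (\<lambda>s. F (s + h0))"
  proof (rule integral_cong)
    fix s assume "s \<in> {0..p}"
    then have "F ((s + h0) + real m * p) = F (s + h0)"
      by (intro periodic_shift_multiple[where F=F]) (use periodic assms h0 in auto)
    then show "F (s + h) = F (s + h0)" unfolding h0_def by (simp add: algebra_simps)
  qed
  also have "\<dots> = integral {0..p} F"
    by (rule integral_periodic_shift_le_period[of F p h0]) (use cont periodic h0 in auto)
  finally show ?thesis .
qed

definition freq :: "real \<Rightarrow> int \<Rightarrow> real" where
  "freq p m = 2 * pi * of_int m / p"

definition fourier_cos :: "real \<Rightarrow> int \<Rightarrow> (real \<Rightarrow> 'a::real_normed_vector) \<Rightarrow> 'a" where
  "fourier_cos p m f = integral {0..p} (\<lambda>s. cos (freq p m * s) *\<^sub>R f s)"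

definition fourier_sin :: "real \<Rightarrow> int \<Rightarrow> (real \<Rightarrow> 'a::real_normed_vector) \<Rightarrow> 'a" where
  "fourier_sin p m f = integral {0..p} (\<lambda>s. sin (freq p m * s) *\<^sub>R f s)"

lemma freq_add: "freq p (j + k) = freq p j + freq p k"
  unfolding freq_def by (simp add: add_divide_distrib distrib_left)

lemma freq_diff: "freq p (j - k) = freq p j - freq p k"
  unfolding freq_def by (simp add: diff_divide_distrib right_diff_distrib)

lemma freq_minus: "freq p (- m) = - freq p m"
  unfolding freq_def by simp

lemma freq_times_period: "0 < p \<Longrightarrow> freq p m * p = 2 * pi * of_int m"
  unfolding freq_def by simp

lemma freq_eq_0_iff: "0 < p \<Longrightarrow> freq p m = 0 \<longleftrightarrow> m = 0"
  unfolding freq_def by simp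

lemma fourier_cos_minus: "fourier_cos p (- m) f = fourier_cos p m f"
  unfolding fourier_cos_def freq_minus by simp

lemma fourier_sin_minus: "fourier_sin p (- m) f = - fourier_sin p m f"
  unfolding fourier_sin_def freq_minus by (simp flip: integral_neg)

lemma has_integral_cos_freq:
  assumes "0 < p"
  shows "((\<lambda>s. cos (freq p m * s)) has_integral (if m = 0 then p else 0)) {0..p}"
proof (cases "m = 0")
  case True
  then show ?thesis using has_integral_const_real[of "1::real" 0 p] assms by (simp add: freq_def)
next
  case False
  let ?F = "\<lambda>s. sin (freq p m * s) / freq p m"
  have "((\<lambda>s. cos (freq p m * s)) has_integral (?F p - ?F 0)) {0..p}"
    using assms False
    by (intro fundamental_theorem_of_calculus)
       (auto simp: freq_eq_0_iff has_real_derivative_iff_has_vector_derivative[symmetric]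
             intro!: derivative_eq_intros)
  then show ?thesis using assms False by (simp add: freq_times_period)
qed

lemma has_integral_sin_freq:
  assumes "0 < p"
  shows "((\<lambda>s. sin (freq p m * s)) has_integral 0) {0..p}"
proof (cases "m = 0")
  case True
  then show ?thesis by (simp add: freq_def)
next
  case False
  let ?F = "\<lambda>s. - cos (freq p m * s) / freq p m"
  have "((\<lambda>s. sin (freq p m * s)) has_integral (?F p - ?F 0)) {0..p}"
    using assms False
    by (intro fundamental_theorem_of_calculus)
       (auto simp: freq_eq_0_iff has_real_derivative_iff_has_vector_derivative[symmetric]
             intro!: derivative_eq_intros)
  then show ?thesis using assms False by (simp add: freq_times_period)
qed

lemma has_integral_cos_cos_freq:
  fixes j k :: nat
  assumes "0 < p"
  shows "((\<lambda>s. cos (freq p j * s) * cos (freq p k * s)) has_integral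
           (if j = k then if k = 0 then p else p / 2 else 0)) {0..p}"
proof -
  have product: "cos (freq p j * s) * cos (freq p k * s)
      = cos (freq p (int j - int k) * s) / 2 + cos (freq p (int j + int k) * s) / 2" for s
    by (simp add: freq_add freq_diff cos_diff cos_add field_simps)
  have "((\<lambda>s. cos (freq p (int j - int k) * s) / 2 + cos (freq p (int j + int k) * s) / 2)
      has_integral ((if int j - int k = 0 then p else 0) / 2 + (if int j + int k = 0 then p else 0) / 2))
      {0..p}"
    by (intro has_integral_add has_integral_divide has_integral_cos_freq assms)
  then show ?thesis unfolding product by (cases "j = k"; cases "k = 0"; simp)
qed

lemma has_integral_cos_sin_freq:
  fixes j k :: nat
  assumes "0 < p"
  shows "((\<lambda>s. cos (freq p j * s) * sin (freq p k * s)) has_integral 0) {0..p}"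
proof -
  have product: "cos (freq p j * s) * sin (freq p k * s)
      = sin (freq p (int k + int j) * s) / 2 + sin (freq p (int k - int j) * s) / 2" for s
    by (simp add: freq_add freq_diff sin_diff sin_add field_simps)
  have "((\<lambda>s. sin (freq p (int k + int j) * s) / 2 + sin (freq p (int k - int j) * s) / 2)
      has_integral (0 / 2 + 0 / 2)) {0..p}"
    by (intro has_integral_add has_integral_divide has_integral_sin_freq assms)
  then show ?thesis unfolding product by simp
qed

lemma fourier_cos_rotation:
  fixes j k :: nat
  assumes "0 < p"
    and rotation: "\<And>s. s \<in> {0..p} \<Longrightarrow> f s = cos (freq p k * s) *\<^sub>R x + sin (freq p k * s) *\<^sub>R x'"
  shows "fourier_cos p j f = (if j = k then if k = 0 then p else p / 2 else 0) *\<^sub>R x"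
proof -
  have "((\<lambda>s. (cos (freq p j * s) * cos (freq p k * s)) *\<^sub>R x
            + (cos (freq p j * s) * sin (freq p k * s)) *\<^sub>R x')
        has_integral (if j = k then if k = 0 then p else p / 2 else 0) *\<^sub>R x + 0 *\<^sub>R x') {0..p}"
    by (intro has_integral_add has_integral_scaleR_left has_integral_cos_cos_freq
        has_integral_cos_sin_freq assms)
  then have "((\<lambda>s. cos (freq p j * s) *\<^sub>R f s)
        has_integral (if j = k then if k = 0 then p else p / 2 else 0) *\<^sub>R x + 0 *\<^sub>R x') {0..p}"
    by (rule has_integral_eq[rotated]) (simp add: rotation scaleR_add_right)
  then show ?thesis unfolding fourier_cos_def by (simp add: integral_unique)
qed

section \<open>Uniqueness of Fourier coefficients\<close>

definition cos_bump :: "real \<Rightarrow> real \<Rightarrow> real" where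
  "cos_bump p s = (1 + cos (freq p 1 * s)) / 2"

lemma cos_bump_nonneg: "0 \<le> cos_bump p s"
  unfolding cos_bump_def using cos_ge_minus_one[of "freq p 1 * s"] by (simp del: cos_ge_minus_one)

lemma cos_bump_le_one: "cos_bump p s \<le> 1"
  unfolding cos_bump_def by simp

lemma continuous_on_cos_bump [continuous_intros]: "continuous_on S (cos_bump p)"
  unfolding cos_bump_def by (intro continuous_intros) auto

lemma cos_bump_strict_antimono:
  assumes "0 < p" "0 \<le> s" "s < s'" "s' \<le> p / 2"
  shows "cos_bump p s' < cos_bump p s"
proof -
  have "cos (2 * pi * s' / p) < cos (2 * pi * s / p)"
    using assms by (intro cos_monotone_0_pi) (auto simp: field_simps)
  then show ?thesis unfolding cos_bump_def freq_def by simp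
qed

lemma cos_bump_antimono:
  assumes "0 < p" "0 \<le> s" "s \<le> s'" "s' \<le> p / 2"
  shows "cos_bump p s' \<le> cos_bump p s"
  using cos_bump_strict_antimono[of p s s'] assms by (cases "s = s'") auto

lemma cos_bump_le_middle:
  assumes "0 < p" "0 \<le> \<delta>" "\<delta> \<le> s" "s \<le> p - \<delta>"
  shows "cos_bump p s \<le> cos_bump p \<delta>"
proof (cases "s \<le> p / 2")
  case True
  then show ?thesis using assms by (intro cos_bump_antimono) auto
next
  case False
  have "freq p 1 * (p - s) = 2 * pi - freq p 1 * s"
    using assms unfolding freq_def by (simp add: field_simps)
  then have "cos_bump p s = cos_bump p (p - s)"
    unfolding cos_bump_def by (simp add: cos_diff)
  also have "\<dots> \<le> cos_bump p \<delta>"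
    using False assms by (intro cos_bump_antimono) auto
  finally show ?thesis .
qed

lemma integral_cos_bump_power_ge:
  assumes "0 < p" "0 \<le> a" "a \<le> p / 2"
  shows "a * cos_bump p a ^ N \<le> integral {0..p} (\<lambda>s. cos_bump p s ^ N)"
proof -
  have integrable: "(\<lambda>s. cos_bump p s ^ N) integrable_on {c..d}" for c d
    by (intro integrable_continuous_real continuous_intros)
  have "a * cos_bump p a ^ N = integral {0..a} (\<lambda>s. cos_bump p a ^ N)"
    using assms by simp
  also have "\<dots> \<le> integral {0..a} (\<lambda>s. cos_bump p s ^ N)"
    using assms integrable
    by (intro integral_le) (auto intro!: power_mono cos_bump_antimono cos_bump_nonneg)
  also have "\<dots> \<le> integral {0..p} (\<lambda>s. cos_bump p s ^ N)"
    using assms integrable by (intro integral_subset_le) (auto simp: cos_bump_nonneg)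
  finally show ?thesis .
qed

lemma cos_bump_mult_trig:
  assumes product_to_sum: "\<And>x y. g (x + y) + g (x - y) = 2 * g x * cos y"
  shows "cos_bump p s * g (freq p m * s)
       = g (freq p m * s) / 2 + g (freq p (m + 1) * s) / 4 + g (freq p (m - 1) * s) / 4"
proof -
  define x y where "x = freq p m * s" and "y = freq p 1 * s"
  have "x + y = freq p (m + 1) * s" "x - y = freq p (m - 1) * s"
    unfolding x_def y_def freq_add freq_diff by (simp_all add: algebra_simps)
  moreover have "cos_bump p s * g x = g x / 2 + g (x + y) / 4 + g (x - y) / 4"
    using product_to_sum[of x y] unfolding cos_bump_def y_def[symmetric] by (simp add: field_simps)
  ultimately show ?thesis unfolding x_def[symmetric] by simp
qed

text \<open>Multiplying by \<open>cos_bump p\<close> averages the neighbouring frequencies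
  \<open>m - 1\<close>, \<open>m\<close>, \<open>m + 1\<close>, so vanishing Fourier coefficients survive it.\<close>
lemma integral_cos_bump_power_trig_vanish:
  fixes f :: "real \<Rightarrow> 'a::banach"
  assumes cont: "continuous_on {0..p} f"
    and coeffs: "\<And>m. fourier_cos p m f = 0" "\<And>m. fourier_sin p m f = 0"
  shows "integral {0..p} (\<lambda>s. (cos_bump p s ^ N * cos (freq p m * s)) *\<^sub>R f s) = 0
       \<and> integral {0..p} (\<lambda>s. (cos_bump p s ^ N * sin (freq p m * s)) *\<^sub>R f s) = 0"
proof (induction N arbitrary: m)
  case 0
  then show ?case using coeffs by (simp add: fourier_cos_def fourier_sin_def)
next
  case (Suc N)
  define F where "F g m s = (cos_bump p s ^ N * g (freq p m * s)) *\<^sub>R f s"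
    for g :: "real \<Rightarrow> real" and m s
  have vanish: "integral {0..p} (\<lambda>s. (cos_bump p s ^ Suc N * g (freq p m * s)) *\<^sub>R f s) = 0"
    if cont_g: "continuous_on UNIV g"
      and product_to_sum: "\<And>x y. g (x + y) + g (x - y) = 2 * g x * cos y"
      and IH: "\<And>m. integral {0..p} (F g m) = 0" for g
  proof -
    have integrable: "F g k integrable_on {0..p}" for k
      unfolding F_def
      by (intro integrable_continuous_real continuous_intros cont
          continuous_on_compose2[OF cont_g]) auto
    have "(cos_bump p s ^ Suc N * g (freq p m * s)) *\<^sub>R f s
        = (1/2) *\<^sub>R F g m s + (1/4) *\<^sub>R F g (m + 1) s + (1/4) *\<^sub>R F g (m - 1) s" for s
    proof -
      have "cos_bump p s ^ Suc N * g (freq p m * s)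
          = (1/2) * (cos_bump p s ^ N * g (freq p m * s))
            + (1/4) * (cos_bump p s ^ N * g (freq p (m + 1) * s))
            + (1/4) * (cos_bump p s ^ N * g (freq p (m - 1) * s))"
        unfolding power_Suc2 mult.assoc cos_bump_mult_trig[OF product_to_sum]
        by (simp add: algebra_simps)
      then show ?thesis unfolding F_def by (simp only: scaleR_add_left scaleR_scaleR)
    qed
    then show ?thesis
      by (simp add: integral_add integrable_add integrable IH)
  qed
  have "continuous_on UNIV (cos :: real \<Rightarrow> real)" "continuous_on UNIV (sin :: real \<Rightarrow> real)"
    by (auto intro: continuous_at_imp_continuous_on)
  moreover have "cos (x + y) + cos (x - y) = 2 * cos x * cos y"
    and "sin (x + y) + sin (x - y) = 2 * sin x * cos y" for x y :: real
    by (simp_all add: cos_add cos_diff sin_add sin_diff)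
  moreover have "\<And>m. integral {0..p} (F cos m) = 0" "\<And>m. integral {0..p} (F sin m) = 0"
    using Suc.IH unfolding F_def by auto
  ultimately show ?case using vanish by blast
qed

lemma integral_cos_bump_power_mult_le:
  assumes p: "0 < p" and cont: "continuous_on {0..p} g"
    and nonneg: "\<And>s. s \<in> {0..p} \<Longrightarrow> 0 \<le> g s" and bounded: "\<And>s. s \<in> {0..p} \<Longrightarrow> g s \<le> G"
    and near_ends: "\<And>s. s \<in> {0..p} \<Longrightarrow> s \<le> \<delta> \<or> p - \<delta> \<le> s \<Longrightarrow> g s \<le> \<epsilon>"
    and "0 \<le> \<delta>"
  shows "integral {0..p} (\<lambda>s. cos_bump p s ^ N * g s)
       \<le> \<epsilon> * integral {0..p} (\<lambda>s. cos_bump p s ^ N) + p * (cos_bump p \<delta> ^ N * G)"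
proof -
  have "0 \<le> G" "0 \<le> \<epsilon>"
    using nonneg[of 0] bounded[of 0] near_ends[of 0] p \<open>0 \<le> \<delta>\<close> by auto
  have "integral {0..p} (\<lambda>s. cos_bump p s ^ N * g s)
      \<le> integral {0..p} (\<lambda>s. \<epsilon> * cos_bump p s ^ N + cos_bump p \<delta> ^ N * G)"
  proof (rule integral_le)
    fix s assume s: "s \<in> {0..p}"
    have bump: "0 \<le> cos_bump p s ^ N" "cos_bump p s ^ N \<le> 1"
      by (simp_all add: cos_bump_nonneg cos_bump_le_one power_le_one)
    show "cos_bump p s ^ N * g s \<le> \<epsilon> * cos_bump p s ^ N + cos_bump p \<delta> ^ N * G"
    proof (cases "s \<le> \<delta> \<or> p - \<delta> \<le> s")
      case True
      then have "cos_bump p s ^ N * g s \<le> cos_bump p s ^ N * \<epsilon>"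
        using near_ends s bump by (intro mult_left_mono) auto
      moreover have "0 \<le> cos_bump p \<delta> ^ N * G" using \<open>0 \<le> G\<close> by (simp add: cos_bump_nonneg)
      ultimately show ?thesis by (simp add: mult.commute)
    next
      case False
      then have "cos_bump p s ^ N \<le> cos_bump p \<delta> ^ N"
        using p \<open>0 \<le> \<delta>\<close> s by (intro power_mono cos_bump_le_middle cos_bump_nonneg) auto
      then have "cos_bump p s ^ N * g s \<le> cos_bump p \<delta> ^ N * G"
        using bounded s nonneg bump by (intro mult_mono) auto
      moreover have "0 \<le> \<epsilon> * cos_bump p s ^ N" using \<open>0 \<le> \<epsilon>\<close> bump by simp
      ultimately show ?thesis by linarith
    qed
  qed (auto intro!: integrable_continuous_real continuous_intros cont)
  also have "\<dots> = \<epsilon> * integral {0..p} (\<lambda>s. cos_bump p s ^ N) + p * (cos_bump p \<delta> ^ N * G)"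
    using p by (subst integral_add) (auto intro!: integrable_continuous_real continuous_intros)
  finally show ?thesis .
qed

lemma continuous_on_small_near_endpoints:
  fixes g :: "real \<Rightarrow> real"
  assumes p: "0 < p" and cont: "continuous_on {0..p} g" and ends: "g 0 = 0" "g p = 0"
    and e: "0 < e"
  obtains \<delta> where "0 < \<delta>" "\<delta> \<le> p / 4" "\<And>s. s \<in> {0..p} \<Longrightarrow> s \<le> \<delta> \<or> p - \<delta> \<le> s \<Longrightarrow> g s \<le> e"
proof -
  have ends_in: "0 \<in> {0..p}" "p \<in> {0..p}" using p by auto
  obtain d0 where d0: "0 < d0" "\<forall>s\<in>{0..p}. dist s 0 < d0 \<longrightarrow> dist (g s) (g 0) < e"
    using cont[unfolded continuous_on_iff, rule_format, OF ends_in(1) e] by blast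
  obtain dp where dp: "0 < dp" "\<forall>s\<in>{0..p}. dist s p < dp \<longrightarrow> dist (g s) (g p) < e"
    using cont[unfolded continuous_on_iff, rule_format, OF ends_in(2) e] by blast
  define \<delta> where "\<delta> = min (min d0 dp) p / 4"
  have \<delta>: "0 < \<delta>" "\<delta> < d0" "\<delta> < dp" "\<delta> \<le> p / 4"
    using d0 dp p unfolding \<delta>_def by auto
  show ?thesis
  proof (rule that[OF \<delta>(1,4)])
    fix s assume s: "s \<in> {0..p}" "s \<le> \<delta> \<or> p - \<delta> \<le> s"
    then have "dist s 0 < d0 \<or> dist s p < dp" using \<delta> by (auto simp: dist_real_def)
    then show "g s \<le> e" using s(1) d0(2) dp(2) ends by (auto simp: dist_real_def)
  qed
qed

text \<open>Away from the endpoints \<open>cos_bump p \<le> q < q'\<close>, while near \<open>0\<close> it stays above \<open>q'\<close>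
  on an interval of positive length; hence \<open>cos_bump p ^ N\<close>, normalised, concentrates
  at the endpoints as \<open>N \<rightarrow> \<infinity>\<close>.\<close>
lemma cos_bump_power_concentrates:
  assumes p: "0 < p" and cont: "continuous_on {0..p} g" and ends: "g 0 = 0" "g p = 0"
    and nonneg: "\<And>s. s \<in> {0..p} \<Longrightarrow> 0 \<le> g s" and e: "0 < e"
  obtains N where "integral {0..p} (\<lambda>s. cos_bump p s ^ N * g s)
                     \<le> e * integral {0..p} (\<lambda>s. cos_bump p s ^ N)"
proof -
  obtain G where G: "\<And>s. s \<in> {0..p} \<Longrightarrow> g s \<le> G"
    using continuous_attains_sup[OF compact_Icc _ cont] p by fastforce
  then have G_nonneg: "0 \<le> G" using nonneg[of 0] p by fastforce
  obtain \<delta> where \<delta>: "0 < \<delta>" "\<delta> \<le> p / 4"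
    and near_ends: "\<And>s. s \<in> {0..p} \<Longrightarrow> s \<le> \<delta> \<or> p - \<delta> \<le> s \<Longrightarrow> g s \<le> e / 2"
    using continuous_on_small_near_endpoints[OF p cont ends, of "e / 2"] e by auto
  define q where "q = cos_bump p \<delta>"
  define q' where "q' = cos_bump p (\<delta> / 2)"
  have "q < q'" unfolding q_def q'_def using \<delta> p by (intro cos_bump_strict_antimono) auto
  moreover have "0 \<le> q" unfolding q_def by (rule cos_bump_nonneg)
  ultimately have q'_pos: "0 < q'" and ratio: "0 \<le> q / q'" "q / q' < 1" by auto
  have pG: "0 < p * G + 1" using p G_nonneg by (simp add: add_nonneg_pos)
  then have "0 < e * (\<delta> / 4) / (p * G + 1)" using e \<delta> by simp
  then obtain N where N: "(q / q') ^ N < e * (\<delta> / 4) / (p * G + 1)"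
    using real_arch_pow_inv[OF _ ratio(2)] by blast
  define I where "I = integral {0..p} (\<lambda>s. cos_bump p s ^ N)"
  have "(\<delta> / 2) * q' ^ N \<le> I"
    unfolding I_def q'_def using p \<delta> by (intro integral_cos_bump_power_ge) auto
  have "integral {0..p} (\<lambda>s. cos_bump p s ^ N * g s) \<le> e / 2 * I + p * (q ^ N * G)"
    unfolding I_def q_def using p cont nonneg G near_ends \<delta>(1)
    by (intro integral_cos_bump_power_mult_le) auto
  also have "p * (q ^ N * G) = (p * G) * (q / q') ^ N * q' ^ N"
    using q'_pos by (simp add: power_divide)
  also have "\<dots> \<le> e * (\<delta> / 4) * q' ^ N"
  proof -
    have "(p * G) * (q / q') ^ N \<le> (p * G + 1) * (q / q') ^ N"
      using ratio by (simp add: mult_right_mono)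
    also have "\<dots> \<le> e * (\<delta> / 4)"
      using N pG by (simp add: pos_less_divide_eq algebra_simps)
    finally show ?thesis using q'_pos by (intro mult_right_mono) auto
  qed
  also have "\<dots> \<le> e / 2 * I"
    using \<open>(\<delta> / 2) * q' ^ N \<le> I\<close> e by (simp add: mult_left_mono)
  finally show ?thesis unfolding I_def by (intro that[of N]) linarith
qed

lemma integral_cos_bump_power_pos: "0 < p \<Longrightarrow> 0 < integral {0..p} (\<lambda>s. cos_bump p s ^ N)"
proof -
  assume p: "0 < p"
  have "(p / 4) * cos_bump p (p / 4) ^ N \<le> integral {0..p} (\<lambda>s. cos_bump p s ^ N)"
    using p by (intro integral_cos_bump_power_ge) auto
  moreover have "cos_bump p (p / 4) = 1 / 2"
    using p unfolding cos_bump_def freq_def by simp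
  moreover have "0 < (p / 4) * (1 / 2 :: real) ^ N" using p by simp
  ultimately show ?thesis by simp
qed

lemma norm_mult_integral_cos_bump_power_le:
  fixes f :: "real \<Rightarrow> 'a::banach"
  assumes cont: "continuous_on {0..p} f"
    and balanced: "integral {0..p} (\<lambda>s. cos_bump p s ^ N *\<^sub>R f s) = 0"
  shows "norm v * integral {0..p} (\<lambda>s. cos_bump p s ^ N)
       \<le> integral {0..p} (\<lambda>s. cos_bump p s ^ N * norm (v - f s))"
proof -
  let ?I = "integral {0..p} (\<lambda>s. cos_bump p s ^ N)"
  have "integral {0..p} (\<lambda>s. cos_bump p s ^ N *\<^sub>R v) = ?I *\<^sub>R v"
    by (intro integral_unique has_integral_scaleR_left integrable_integral
        integrable_continuous_real continuous_intros)
  moreover have "integral {0..p} (\<lambda>s. cos_bump p s ^ N *\<^sub>R (v - f s))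
      = integral {0..p} (\<lambda>s. cos_bump p s ^ N *\<^sub>R v)
        - integral {0..p} (\<lambda>s. cos_bump p s ^ N *\<^sub>R f s)"
    unfolding scaleR_diff_right
    by (intro integral_diff integrable_continuous_real continuous_intros cont)
  moreover have "0 \<le> ?I"
    by (intro integral_nonneg integrable_continuous_real continuous_intros)
       (simp add: cos_bump_nonneg)
  ultimately have "norm v * ?I = norm (integral {0..p} (\<lambda>s. cos_bump p s ^ N *\<^sub>R (v - f s)))"
    by (simp add: balanced)
  also have "\<dots> \<le> integral {0..p} (\<lambda>s. cos_bump p s ^ N * norm (v - f s))"
    by (intro integral_norm_bound_integral)
       (auto intro!: integrable_continuous_real continuous_intros cont simp: cos_bump_nonneg)
  finally show ?thesis .
qed

lemma fourier_coeffs_zero_imp_zero: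
  fixes f :: "real \<Rightarrow> 'a::banach"
  assumes p: "0 < p" and cont: "continuous_on {0..p} f" and periodic: "f p = f 0"
    and coeffs: "\<And>k::nat. fourier_cos p k f = 0" "\<And>k::nat. fourier_sin p k f = 0"
  shows "f 0 = 0"
proof -
  have "fourier_cos p m f = 0 \<and> fourier_sin p m f = 0" for m
  proof (cases "0 \<le> m")
    case True
    then show ?thesis using coeffs[of "nat m"] by simp
  next
    case False
    define k where "k = nat (- m)"
    have "m = - int k" using False unfolding k_def by simp
    then show ?thesis
      using coeffs[of k] by (simp add: fourier_cos_minus fourier_sin_minus)
  qed
  then have balanced: "integral {0..p} (\<lambda>s. cos_bump p s ^ N *\<^sub>R f s) = 0" for N
    using integral_cos_bump_power_trig_vanish[OF cont, of N 0] by (simp add: freq_def)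
  have "norm (f 0) \<le> e" if e: "0 < e" for e
  proof -
    have "continuous_on {0..p} (\<lambda>s. norm (f 0 - f s))"
      by (intro continuous_intros cont)
    then obtain N where N: "integral {0..p} (\<lambda>s. cos_bump p s ^ N * norm (f 0 - f s))
                     \<le> e * integral {0..p} (\<lambda>s. cos_bump p s ^ N)"
      by (rule cos_bump_power_concentrates[OF p _ _ _ _ e]) (simp_all add: periodic)
    then have "norm (f 0) * integral {0..p} (\<lambda>s. cos_bump p s ^ N)
        \<le> e * integral {0..p} (\<lambda>s. cos_bump p s ^ N)"
      using norm_mult_integral_cos_bump_power_le[OF cont balanced] by (rule order_trans[rotated])
    then show ?thesis using integral_cos_bump_power_pos[OF p] by simp
  qed
  then have "norm (f 0) \<le> 0"
    by (rule field_le_epsilon) simp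
  then show ?thesis by simp
qed

section \<open>Bounded \<open>C\<^sub>0\<close>-semigroups and rotating pairs\<close>

definition plane_point :: "'a::real_vector \<Rightarrow> 'a \<Rightarrow> complex \<Rightarrow> 'a" where
  "plane_point w w' z = Re z *\<^sub>R w + Im z *\<^sub>R w'"

lemma plane_point_diff: "plane_point w w' a - plane_point w w' b = plane_point w w' (a - b)"
  unfolding plane_point_def by (simp add: algebra_simps)

lemma plane_point_1 [simp]: "plane_point w w' 1 = w"
  unfolding plane_point_def by simp

locale bounded_C0_semigroup =
  fixes T :: "real \<Rightarrow> ('a::banach \<Rightarrow>\<^sub>L 'a)" and M :: real
  assumes C0: "C0_semigroup T" and norm_T_le: "\<And>t. 0 \<le> t \<Longrightarrow> norm (T t) \<le> M"
begin

lemma T_0 [simp]: "T 0 x = x"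
  using C0 unfolding C0_semigroup_def by simp

lemma T_add: "0 \<le> s \<Longrightarrow> 0 \<le> r \<Longrightarrow> T (s + r) x = T s (T r x)"
  using C0 unfolding C0_semigroup_def by simp

lemma T_commute: "0 \<le> s \<Longrightarrow> 0 \<le> r \<Longrightarrow> T s (T r x) = T r (T s x)"
  by (metis T_add add.commute)

lemma continuous_on_orbit: "continuous_on {0..} (\<lambda>t. T t x)"
  using C0 unfolding C0_semigroup_def by simp

lemma bound_nonneg: "0 \<le> M"
  using norm_T_le[of 0] norm_ge_zero[of "T 0"] by linarith

lemma norm_T_apply_le: "0 \<le> t \<Longrightarrow> norm (T t x) \<le> M * norm x"
  by (meson norm_blinfun mult_right_mono norm_ge_zero norm_T_le order_trans)

lemma growth_bound_le_0: "growth_bound T \<le> 0"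
proof -
  have "ereal 0 \<in> {ereal \<omega> | \<omega>. \<exists>C. \<forall>t\<ge>0. norm (T t) \<le> C * exp (\<omega> * t)}"
    using norm_T_le by auto
  then show ?thesis unfolding growth_bound_def zero_ereal_def by (rule Inf_lower)
qed

text \<open>\<open>T (m * \<tau>) u = u + m *\<^sub>R w\<close> stays bounded only if \<open>w = 0\<close>.\<close>
lemma fixed_in_range_diff_eq_0:
  assumes "0 \<le> \<tau>" and fixed: "T \<tau> w = w" and range: "w = T \<tau> u - u"
  shows "w = 0"
proof -
  have iterate: "T (real m * \<tau>) u = u + real m *\<^sub>R w" for m
  proof (induction m)
    case (Suc m)
    have "T (real (Suc m) * \<tau>) u = T \<tau> (T (real m * \<tau>) u)"
      using T_add[of \<tau> "real m * \<tau>"] \<open>0 \<le> \<tau>\<close> by (simp add: algebra_simps)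
    also have "\<dots> = T \<tau> u + real m *\<^sub>R T \<tau> w"
      unfolding Suc by (simp add: blinfun.add_right blinfun.scaleR_right)
    also have "\<dots> = u + real (Suc m) *\<^sub>R w"
      unfolding fixed by (simp add: range algebra_simps)
    finally show ?case .
  qed simp
  have bounded: "real m * norm w \<le> (M + 1) * norm u" for m
  proof -
    have "real m * norm w = norm (T (real m * \<tau>) u - u)" using iterate[of m] by simp
    also have "\<dots> \<le> M * norm u + norm u"
      using norm_triangle_ineq4[of "T (real m * \<tau>) u" u] norm_T_apply_le[of "real m * \<tau>" u]
        \<open>0 \<le> \<tau>\<close> by simp
    finally show ?thesis by (simp add: algebra_simps)
  qed
  show "w = 0"
  proof (rule ccontr)
    assume "w \<noteq> 0"
    obtain m :: nat where "(M + 1) * norm u / norm w < real m"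
      using reals_Archimedean2 by blast
    with \<open>w \<noteq> 0\<close> have "(M + 1) * norm u < real m * norm w"
      by (simp add: pos_divide_less_eq)
    then show False using bounded[of m] by simp
  qed
qed

definition diff_prod :: "(nat \<Rightarrow> real) \<Rightarrow> nat list \<Rightarrow> 'a \<Rightarrow>\<^sub>L 'a" where
  "diff_prod t L = foldr (\<lambda>i A. (T (t i) - id_blinfun) o\<^sub>L A) L id_blinfun"

lemma diff_prod_Nil [simp]: "diff_prod t [] x = x"
  by (simp add: diff_prod_def)

lemma diff_prod_Cons: "diff_prod t (i # L) x = T (t i) (diff_prod t L x) - diff_prod t L x"
  by (simp add: diff_prod_def blinfun.diff_left)

lemma diff_prod_snoc: "diff_prod t (L @ [i]) x = diff_prod t L (T (t i) x - x)"
  by (induction L) (simp_all add: diff_prod_Cons)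

lemma diff_prod_commute:
  "\<forall>i\<in>set L. 0 \<le> t i \<Longrightarrow> 0 \<le> s \<Longrightarrow> diff_prod t L (T s x) = T s (diff_prod t L x)"
  by (induction L) (simp_all add: diff_prod_Cons blinfun.diff_right T_commute)

lemma diff_prod_remove1:
  assumes "i \<in> set L" "\<forall>j\<in>set L. 0 \<le> t j"
  shows "diff_prod t L x = T (t i) (diff_prod t (remove1 i L) x) - diff_prod t (remove1 i L) x"
  using assms
proof (induction L)
  case (Cons a L)
  show ?case
  proof (cases "a = i")
    case False
    define v where "v = diff_prod t (remove1 i L) x"
    have "diff_prod t (a # L) x = T (t a) (T (t i) v - v) - (T (t i) v - v)"
      using Cons False unfolding v_def by (simp add: diff_prod_Cons)
    also have "\<dots> = T (t i) (T (t a) v - v) - (T (t a) v - v)"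
      using T_commute[of "t a" "t i" v] Cons.prems False by (simp add: blinfun.diff_right)
    also have "T (t a) v - v = diff_prod t (remove1 i (a # L)) x"
      using False unfolding v_def by (simp add: diff_prod_Cons)
    finally show ?thesis .
  qed (simp add: diff_prod_Cons)
qed simp

definition rotating :: "real \<Rightarrow> 'a \<Rightarrow> 'a \<Rightarrow> bool" where
  "rotating \<omega> w w' \<longleftrightarrow> (\<forall>r\<ge>0. T r w = cos (\<omega> * r) *\<^sub>R w + sin (\<omega> * r) *\<^sub>R w'
                                \<and> T r w' = cos (\<omega> * r) *\<^sub>R w' - sin (\<omega> * r) *\<^sub>R w)"

lemma rotating_scaleR: "rotating \<omega> w w' \<Longrightarrow> rotating \<omega> (c *\<^sub>R w) (c *\<^sub>R w')"
  unfolding rotating_def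
  by (simp add: blinfun.scaleR_right scaleR_add_right scaleR_diff_right mult.commute)

lemma rotating_plane_point:
  assumes "rotating \<omega> w w'" "0 \<le> r"
  shows "T r (plane_point w w' z) = plane_point w w' (cis (\<omega> * r) * z)"
proof -
  have rotation: "T r w = cos (\<omega> * r) *\<^sub>R w + sin (\<omega> * r) *\<^sub>R w'"
    "T r w' = cos (\<omega> * r) *\<^sub>R w' - sin (\<omega> * r) *\<^sub>R w"
    using assms unfolding rotating_def by auto
  show ?thesis
    unfolding plane_point_def blinfun.add_right blinfun.scaleR_right rotation
    by (simp add: algebra_simps)
qed

lemma diff_prod_plane_point:
  assumes "rotating \<omega> w w'" and "\<forall>i\<in>set L. 0 \<le> t i"
  shows "diff_prod t L (plane_point w w' z)
       = plane_point w w' (prod_list (map (\<lambda>i. cis (\<omega> * t i) - 1) L) * z)"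
  using assms(2)
proof (induction L)
  case (Cons i L)
  then show ?case
    by (simp add: diff_prod_Cons rotating_plane_point[OF assms(1)] plane_point_diff algebra_simps)
qed (simp add: plane_point_def)

end

section \<open>Harmonic decomposition of periodic vectors\<close>

locale periodic_C0_semigroup = bounded_C0_semigroup +
  fixes p :: real
  assumes period_pos: "0 < p"
begin

definition periodic_vectors :: "'a set" where
  "periodic_vectors = {y. T p y = y}"

lemma subspace_periodic_vectors: "subspace periodic_vectors"
  unfolding subspace_def periodic_vectors_def
  by (simp add: blinfun.add_right blinfun.scaleR_right)

lemma T_periodic: "y \<in> periodic_vectors \<Longrightarrow> 0 \<le> s \<Longrightarrow> T (s + p) y = T s y"
  using T_add[of s p y] period_pos unfolding periodic_vectors_def by simp

lemma T_in_periodic_vectors: "y \<in> periodic_vectors \<Longrightarrow> 0 \<le> s \<Longrightarrow> T s y \<in> periodic_vectors"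
  using T_commute[of s p y] period_pos unfolding periodic_vectors_def by simp

lemma T_multiple_period: "y \<in> periodic_vectors \<Longrightarrow> T (real m * p) y = y"
  using periodic_shift_multiple[of "\<lambda>s. T s y" p 0 m] T_periodic period_pos by simp

definition orbit_cos :: "int \<Rightarrow> 'a \<Rightarrow> 'a" where
  "orbit_cos m y = fourier_cos p m (\<lambda>s. T s y)"

definition orbit_sin :: "int \<Rightarrow> 'a \<Rightarrow> 'a" where
  "orbit_sin m y = fourier_sin p m (\<lambda>s. T s y)"

lemma integrable_orbit:
  "continuous_on {0..p} g \<Longrightarrow> (\<lambda>s. g s *\<^sub>R T s x) integrable_on {0..p}"
  by (intro integrable_continuous_real continuous_intros continuous_on_subset[OF continuous_on_orbit])
     auto

lemma blinfun_apply_integral_orbit: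
  fixes B :: "'a \<Rightarrow>\<^sub>L 'a"
  assumes "continuous_on {0..p} g"
  shows "B (integral {0..p} (\<lambda>s. g s *\<^sub>R T s x)) = integral {0..p} (\<lambda>s. g s *\<^sub>R B (T s x))"
  using integral_linear[OF integrable_orbit[OF assms] blinfun.bounded_linear_right, of B]
  by (simp add: o_def blinfun.scaleR_right)

lemma orbit_cos_commute:
  fixes B :: "'a \<Rightarrow>\<^sub>L 'a"
  assumes "\<And>s. 0 \<le> s \<Longrightarrow> B (T s x) = T s (B x)"
  shows "B (orbit_cos m x) = orbit_cos m (B x)"
  unfolding orbit_cos_def fourier_cos_def
  by (subst blinfun_apply_integral_orbit) (auto intro!: continuous_intros integral_cong simp: assms)

lemma linear_orbit_cos: "linear (orbit_cos m)"
proof (rule linearI)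
  show "orbit_cos m (x + y) = orbit_cos m x + orbit_cos m y" for x y
    unfolding orbit_cos_def fourier_cos_def
    by (simp add: blinfun.add_right scaleR_add_right integral_add integrable_orbit
        continuous_intros)
  show "orbit_cos m (c *\<^sub>R x) = c *\<^sub>R orbit_cos m x" for c x
    unfolding orbit_cos_def fourier_cos_def
    by (simp add: blinfun.scaleR_right integral_cmul[symmetric] mult.commute del: integral_cmul)
qed

lemma norm_orbit_cos_le: "norm (orbit_cos m x) \<le> p * M * norm x"
proof -
  have "norm (orbit_cos m x) \<le> integral {0..p} (\<lambda>s. M * norm x)"
    unfolding orbit_cos_def fourier_cos_def
  proof (rule integral_norm_bound_integral)
    show "norm (cos (freq p m * s) *\<^sub>R T s x) \<le> M * norm x" if "s \<in> {0..p}" for s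
      using that abs_cos_le_one[of "freq p m * s"] norm_T_apply_le[of s x] bound_nonneg
      by (simp add: mult_le_one mult_right_le_one_le order_trans[OF mult_left_le_one_le])
    show "(\<lambda>s. cos (freq p m * s) *\<^sub>R T s x) integrable_on {0..p}"
      by (rule integrable_orbit) (intro continuous_intros)
  qed (auto intro!: integrable_continuous_real continuous_intros)
  then show ?thesis using period_pos by (simp add: ac_simps)
qed

text \<open>Translating a periodic orbit by \<open>r\<close> only shifts the phase of its Fourier
  coefficients, since the integral over a full period is shift invariant.\<close>
lemma T_apply_orbit_trig_integral:
  assumes y: "y \<in> periodic_vectors" and r: "0 \<le> r" and cont: "continuous_on UNIV \<phi>"
    and phi_periodic: "\<And>x. \<phi> (x + 2 * pi * of_int m) = \<phi> x"
  shows "T r (integral {0..p} (\<lambda>s. \<phi> (freq p m * s) *\<^sub>R T s y))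
       = integral {0..p} (\<lambda>s. \<phi> (freq p m * (s - r)) *\<^sub>R T s y)"
proof -
  define F where "F = (\<lambda>s. \<phi> (freq p m * (s - r)) *\<^sub>R T s y)"
  have "continuous_on {0..} F"
    unfolding F_def
    by (intro continuous_intros continuous_on_compose2[OF cont] continuous_on_orbit) auto
  moreover have "F (s + p) = F s" if "0 \<le> s" for s
  proof -
    have "freq p m * (s + p - r) = freq p m * (s - r) + 2 * pi * of_int m"
      using freq_times_period[OF period_pos, of m] by (simp add: algebra_simps)
    then show ?thesis unfolding F_def using phi_periodic T_periodic[OF y that] by simp
  qed
  ultimately have "integral {0..p} (\<lambda>s. F (s + r)) = integral {0..p} F"
    using integral_periodic_shift r period_pos by blast
  moreover have "T r (integral {0..p} (\<lambda>s. \<phi> (freq p m * s) *\<^sub>R T s y))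
      = integral {0..p} (\<lambda>s. F (s + r))"
    unfolding F_def
    by (subst blinfun_apply_integral_orbit)
       (auto intro!: continuous_intros continuous_on_compose2[OF cont] integral_cong
             simp: T_add[symmetric] add.commute r)
  ultimately show ?thesis unfolding F_def by simp
qed

lemma rotating_orbit_coeffs:
  assumes y: "y \<in> periodic_vectors"
  shows "rotating (freq p m) (orbit_cos m y) (orbit_sin m y)"
  unfolding rotating_def
proof (intro allI impI conjI)
  fix r :: real assume r: "0 \<le> r"
  have cont: "continuous_on UNIV (cos :: real \<Rightarrow> real)" "continuous_on UNIV (sin :: real \<Rightarrow> real)"
    by (auto intro: continuous_at_imp_continuous_on)
  have periodic: "cos (x + 2 * pi * of_int m) = cos x" "sin (x + 2 * pi * of_int m) = sin x" for x
    by (simp_all add: cos_add sin_add)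
  have integrable: "(\<lambda>s. cos (freq p m * s) *\<^sub>R T s y) integrable_on {0..p}"
    "(\<lambda>s. sin (freq p m * s) *\<^sub>R T s y) integrable_on {0..p}"
    by (intro integrable_orbit continuous_intros)+
  let ?c = "cos (freq p m * r)" and ?s = "sin (freq p m * r)"
  have "T r (orbit_cos m y) = integral {0..p}
      (\<lambda>s. ?c *\<^sub>R (cos (freq p m * s) *\<^sub>R T s y) + ?s *\<^sub>R (sin (freq p m * s) *\<^sub>R T s y))"
    unfolding orbit_cos_def fourier_cos_def
      T_apply_orbit_trig_integral[OF y r cont(1) periodic(1)]
    by (rule integral_cong) (simp add: right_diff_distrib cos_diff algebra_simps)
  then show "T r (orbit_cos m y) = ?c *\<^sub>R orbit_cos m y + ?s *\<^sub>R orbit_sin m y"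
    unfolding orbit_cos_def orbit_sin_def fourier_cos_def fourier_sin_def
    by (simp only: integral_add[OF integrable_cmul[OF integrable(1)] integrable_cmul[OF integrable(2)]]
        integral_cmul)
  have "T r (orbit_sin m y) = integral {0..p}
      (\<lambda>s. ?c *\<^sub>R (sin (freq p m * s) *\<^sub>R T s y) - ?s *\<^sub>R (cos (freq p m * s) *\<^sub>R T s y))"
    unfolding orbit_sin_def fourier_sin_def
      T_apply_orbit_trig_integral[OF y r cont(2) periodic(2)]
    by (rule integral_cong) (simp add: right_diff_distrib sin_diff algebra_simps)
  then show "T r (orbit_sin m y) = ?c *\<^sub>R orbit_sin m y - ?s *\<^sub>R orbit_cos m y"
    unfolding orbit_cos_def orbit_sin_def fourier_cos_def fourier_sin_def
    by (simp only: integral_diff[OF integrable_cmul[OF integrable(2)] integrable_cmul[OF integrable(1)]]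
        integral_cmul)
qed

definition harmonic :: "nat \<Rightarrow> 'a \<Rightarrow> 'a" where
  "harmonic k y = (if k = 0 then 1 / p else 2 / p) *\<^sub>R orbit_cos k y"

lemma rotating_harmonic:
  "y \<in> periodic_vectors \<Longrightarrow> \<exists>w'. rotating (freq p k) (harmonic k y) w'"
  unfolding harmonic_def using rotating_scaleR[OF rotating_orbit_coeffs] by blast

lemma harmonic_of_rotating:
  fixes j k :: nat
  assumes "rotating (freq p k) w w'"
  shows "harmonic j w = (if j = k then w else 0)"
proof -
  have "orbit_cos j w = (if j = k then if k = 0 then p else p / 2 else 0) *\<^sub>R w"
    unfolding orbit_cos_def using assms period_pos
    by (intro fourier_cos_rotation[where x' = w']) (auto simp: rotating_def)
  then show ?thesis unfolding harmonic_def using period_pos by auto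
qed

lemma plane_point_in_periodic_vectors:
  assumes "rotating (freq p k) w w'"
  shows "plane_point w w' z \<in> periodic_vectors"
  using rotating_plane_point[OF assms, of p z] period_pos
  unfolding periodic_vectors_def freq_times_period[OF period_pos] by simp

lemma harmonic_in_periodic_vectors: "y \<in> periodic_vectors \<Longrightarrow> harmonic k y \<in> periodic_vectors"
  using rotating_harmonic plane_point_in_periodic_vectors[where z = 1] by fastforce

lemma linear_harmonic: "linear (harmonic k)"
  unfolding harmonic_def using linear_orbit_cos
  by (simp add: linear_iff scaleR_add_right scaleR_left_commute)

lemma harmonic_commute:
  fixes B :: "'a \<Rightarrow>\<^sub>L 'a"
  assumes "\<And>s. 0 \<le> s \<Longrightarrow> B (T s x) = T s (B x)"
  shows "B (harmonic k x) = harmonic k (B x)"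
  unfolding harmonic_def using orbit_cos_commute[OF assms] by (simp add: blinfun.scaleR_right)

lemma T_orbit_cos:
  "y \<in> periodic_vectors \<Longrightarrow> 0 \<le> r
    \<Longrightarrow> T r (orbit_cos m y) = cos (freq p m * r) *\<^sub>R orbit_cos m y + sin (freq p m * r) *\<^sub>R orbit_sin m y"
  using rotating_orbit_coeffs unfolding rotating_def by blast

lemma orbit_sin_eq_orbit_cos_shift:
  fixes k :: nat
  assumes y: "y \<in> periodic_vectors" and k: "0 < k"
  shows "orbit_sin k y = orbit_cos k (T (p / (4 * k)) y)"
proof -
  have angle: "freq p k * (p / (4 * k)) = pi / 2"
    using period_pos k unfolding freq_def by (simp add: field_simps)
  have "T (p / (4 * k)) (orbit_cos k y) = orbit_sin k y"
    using T_orbit_cos[OF y, of "p / (4 * k)" k, unfolded angle] period_pos by simp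
  moreover have "T (p / (4 * k)) (orbit_cos k y) = orbit_cos k (T (p / (4 * k)) y)"
    using period_pos by (intro orbit_cos_commute T_commute) auto
  ultimately show ?thesis by simp
qed

text \<open>Over half a period the \<open>k\<close>-th harmonic changes sign, so it is controlled
  by the displacement \<open>y - T (p / (2 * k)) y\<close>.\<close>
lemma norm_harmonic_le:
  fixes k :: nat
  assumes y: "y \<in> periodic_vectors" and k: "0 < k"
  shows "norm (harmonic k y) \<le> M * norm (y - T (p / (2 * k)) y)"
proof -
  define h where "h = p / (2 * k)"
  have "freq p k * h = pi"
    using period_pos k unfolding h_def freq_def by (simp add: field_simps)
  then have "T h (orbit_cos k y) = - orbit_cos k y"
    using T_orbit_cos[OF y, of h k] period_pos unfolding h_def by simp
  moreover have "T h (orbit_cos k y) = orbit_cos k (T h y)"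
    using period_pos unfolding h_def by (intro orbit_cos_commute T_commute) auto
  ultimately have "orbit_cos k (y - T h y) = 2 *\<^sub>R orbit_cos k y"
    using linear_diff[OF linear_orbit_cos] by (simp add: scaleR_2)
  then have "2 * norm (orbit_cos k y) \<le> p * M * norm (y - T h y)"
    using norm_orbit_cos_le[of k "y - T h y"] by simp
  then show ?thesis
    using period_pos k unfolding harmonic_def h_def by (simp add: field_simps)
qed

lemma high_harmonics_vanish:
  assumes small: "M * \<eta> < 1" and \<delta>: "0 < \<delta>"
    and near_identity: "\<And>h y. 0 < h \<Longrightarrow> h < \<delta> \<Longrightarrow> y \<in> periodic_vectors
                          \<Longrightarrow> norm (y - T h y) \<le> \<eta> * norm y"
  obtains K where "\<And>k y. K < k \<Longrightarrow> y \<in> periodic_vectors \<Longrightarrow> harmonic k y = 0"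
proof
  fix k y assume k: "nat \<lceil>p / (2 * \<delta>)\<rceil> < k" and y: "y \<in> periodic_vectors"
  then have "p / (2 * \<delta>) < k" by linarith
  have k_pos: "0 < k" using k by simp
  have h: "0 < p / (2 * k)" "p / (2 * k) < \<delta>"
    using period_pos \<delta> k_pos \<open>p / (2 * \<delta>) < k\<close> by (simp_all add: field_simps)
  obtain w' where rot: "rotating (freq p k) (harmonic k y) w'"
    using rotating_harmonic[OF y] by blast
  let ?w = "harmonic k y"
  have "norm ?w = norm (harmonic k ?w)"
    using harmonic_of_rotating[OF rot, of k] by simp
  also have "\<dots> \<le> M * (\<eta> * norm ?w)"
    using norm_harmonic_le[OF harmonic_in_periodic_vectors[OF y] k_pos]
      near_identity[OF h harmonic_in_periodic_vectors[OF y]] bound_nonneg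
    by (meson mult_left_mono order_trans)
  finally have "(1 - M * \<eta>) * norm ?w \<le> 0" by (simp add: algebra_simps)
  then show "harmonic k y = 0"
    using small by (simp add: mult_le_0_iff)
qed

lemma periodic_vector_eq_0_if_harmonics_eq_0:
  assumes y: "y \<in> periodic_vectors"
    and harmonics: "\<And>k s. 0 \<le> s \<Longrightarrow> harmonic k (T s y) = 0"
  shows "y = 0"
proof -
  have cos: "orbit_cos k (T s y) = 0" if "0 \<le> s" for k :: nat and s
    using harmonics[OF that, of k] period_pos unfolding harmonic_def by (simp split: if_splits)
  have sin: "orbit_sin k y = 0" for k :: nat
  proof (cases "k = 0")
    case True
    then show ?thesis by (simp add: orbit_sin_def fourier_sin_def freq_def)
  next
    case False
    then show ?thesis
      using orbit_sin_eq_orbit_cos_shift[OF y] cos period_pos by simp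
  qed
  have "(\<lambda>s. T s y) 0 = 0"
  proof (rule fourier_coeffs_zero_imp_zero[OF period_pos])
    show "continuous_on {0..p} (\<lambda>s. T s y)"
      using continuous_on_orbit by (rule continuous_on_subset) auto
    show "T p y = T 0 y"
      using y unfolding periodic_vectors_def by simp
  qed (use cos[of 0] sin in \<open>simp_all add: orbit_cos_def orbit_sin_def\<close>)
  then show ?thesis by simp
qed

lemma periodic_vector_eq_sum_harmonics:
  assumes finite: "\<And>k y. K < k \<Longrightarrow> y \<in> periodic_vectors \<Longrightarrow> harmonic k y = 0"
    and y: "y \<in> periodic_vectors"
  shows "y = (\<Sum>k\<le>K. harmonic k y)"
proof -
  define R where "R y = y - (\<Sum>k\<le>K. harmonic k y)" for y
  have harmonic_R: "harmonic j (R y) = 0" if y: "y \<in> periodic_vectors" for j y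
  proof -
    have "(\<Sum>k\<le>K. harmonic j (harmonic k y)) = (\<Sum>k\<le>K. if j = k then harmonic k y else 0)"
      using rotating_harmonic[OF y] harmonic_of_rotating by (intro sum.cong) blast+
    then have "harmonic j (R y) = harmonic j y - (if j \<le> K then harmonic j y else 0)"
      unfolding R_def using linear_harmonic[of j]
      by (simp add: linear_diff linear_sum sum.delta)
    then show ?thesis using finite[of j y] y by (cases "j \<le> K") auto
  qed
  have "R y = 0"
  proof (rule periodic_vector_eq_0_if_harmonics_eq_0)
    show "R y \<in> periodic_vectors"
      unfolding R_def using y subspace_periodic_vectors harmonic_in_periodic_vectors
      by (intro subspace_diff subspace_sum) auto
    fix k and s :: real assume "0 \<le> s"
    then have "T s (R y) = R (T s y)"
      unfolding R_def by (simp add: blinfun.diff_right blinfun.sum_right harmonic_commute T_commute)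
    then show "harmonic k (T s (R y)) = 0"
      using harmonic_R T_in_periodic_vectors[OF y \<open>0 \<le> s\<close>] by simp
  qed
  then show ?thesis unfolding R_def by simp
qed

text \<open>On the plane of a rotating pair \<open>diff_prod t L\<close> is multiplication by a complex
  number \<open>c\<close>. If \<open>c \<noteq> 0\<close> it can be inverted inside the plane; if \<open>c = 0\<close>, some
  \<open>T (t i)\<close> fixes \<open>w\<close>, which also lies in the range of \<open>T (t i) - id\<close>, so \<open>w = 0\<close>.\<close>
lemma diff_prod_periodic_preimage_of_rotating:
  assumes rot: "rotating (freq p k) w w'" and t: "\<forall>i\<in>set L. 0 \<le> t i"
    and w: "w = diff_prod t L v"
  shows "\<exists>z\<in>periodic_vectors. diff_prod t L z = w"
proof -
  define c where "c = prod_list (map (\<lambda>i. cis (freq p k * t i) - 1) L)"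
  show ?thesis
  proof (cases "c = 0")
    case False
    have "diff_prod t L (plane_point w w' (1 / c)) = w"
      using diff_prod_plane_point[OF rot t, of "1 / c"] False unfolding c_def by simp
    then show ?thesis using plane_point_in_periodic_vectors[OF rot] by blast
  next
    case True
    then obtain i where i: "i \<in> set L" "cis (freq p k * t i) = 1"
      unfolding c_def prod_list_zero_iff by auto
    have "T (t i) w = w"
      using rotating_plane_point[OF rot, of "t i" 1] i t by simp
    moreover have "w = T (t i) (diff_prod t (remove1 i L) v) - diff_prod t (remove1 i L) v"
      using w diff_prod_remove1[OF i(1) t] by simp
    ultimately have "w = 0"
      using fixed_in_range_diff_eq_0 i t by blast
    then show ?thesis
      using subspace_0[OF subspace_periodic_vectors] by (intro bexI[of _ 0]) simp_all
  qed
qed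

lemma diff_prod_periodic_preimage_of_finite_harmonics:
  assumes finite: "\<And>k y. K < k \<Longrightarrow> y \<in> periodic_vectors \<Longrightarrow> harmonic k y = 0"
    and t: "\<forall>i\<in>set L. 0 \<le> t i" and y: "diff_prod t L x \<in> periodic_vectors"
  shows "\<exists>z\<in>periodic_vectors. diff_prod t L z = diff_prod t L x"
proof -
  have "\<exists>z\<in>periodic_vectors. diff_prod t L z = harmonic k (diff_prod t L x)" for k
  proof -
    obtain w' where "rotating (freq p k) (harmonic k (diff_prod t L x)) w'"
      using rotating_harmonic[OF y] by blast
    moreover have "harmonic k (diff_prod t L x) = diff_prod t L (harmonic k x)"
      by (rule harmonic_commute[symmetric]) (simp add: diff_prod_commute t)
    ultimately show ?thesis by (rule diff_prod_periodic_preimage_of_rotating[OF _ t])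
  qed
  then obtain z where z: "\<And>k. z k \<in> periodic_vectors"
    "\<And>k. diff_prod t L (z k) = harmonic k (diff_prod t L x)"
    by metis
  have "(\<Sum>k\<le>K. z k) \<in> periodic_vectors"
    by (intro subspace_sum[OF subspace_periodic_vectors] z(1))
  moreover have "diff_prod t L (\<Sum>k\<le>K. z k) = diff_prod t L x"
    using periodic_vector_eq_sum_harmonics[OF finite y] by (simp add: blinfun.sum_right z(2))
  ultimately show ?thesis by blast
qed

section \<open>Norm continuity at infinity\<close>

lemma periodic_vector_eq_0_if_growth_bound_neg:
  assumes "growth_bound T < 0" and y: "y \<in> periodic_vectors"
  shows "y = 0"
proof (rule ccontr)
  assume "y \<noteq> 0"
  obtain \<omega> C where \<omega>: "\<omega> < 0" and C: "\<forall>t\<ge>0. norm (T t) \<le> C * exp (\<omega> * t)"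
    using assms(1) unfolding growth_bound_def Inf_less_iff by auto
  have "exp (\<omega> * p) < 1" using \<omega> period_pos by (simp add: mult_neg_pos)
  moreover have "0 < 1 / (\<bar>C\<bar> + 1)" by (simp add: add_nonneg_pos)
  ultimately obtain m where m: "exp (\<omega> * p) ^ m < 1 / (\<bar>C\<bar> + 1)"
    using real_arch_pow_inv by blast
  have "norm y = norm (T (real m * p) y)"
    using T_multiple_period[OF y] by simp
  also have "\<dots> \<le> norm (T (real m * p)) * norm y"
    by (rule norm_blinfun)
  also have "\<dots> \<le> C * exp (\<omega> * p) ^ m * norm y"
    using C[rule_format, of "real m * p"] period_pos exp_of_nat_mult[of m "\<omega> * p"]
    by (intro mult_right_mono) (simp_all add: algebra_simps)
  also have "\<dots> \<le> \<bar>C\<bar> * (1 / (\<bar>C\<bar> + 1)) * norm y"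
    using m by (intro mult_right_mono mult_mono) auto
  also have "\<dots> < norm y"
    using \<open>y \<noteq> 0\<close> by (simp add: field_simps)
  finally show False by simp
qed

text \<open>With growth bound \<open>0\<close>, norm continuity at infinity says that
  \<open>T t (id - T h)\<close> is small for large \<open>t\<close> and small \<open>h\<close>; taking \<open>t\<close> a multiple
  of the period, \<open>T t\<close> acts as the identity on periodic vectors.\<close>
lemma periodic_vectors_near_identity:
  assumes "norm_continuous_at_infinity T" "growth_bound T = 0" and \<eta>: "0 < \<eta>"
  obtains \<delta> where "0 < \<delta>"
    "\<And>h y. 0 < h \<Longrightarrow> h < \<delta> \<Longrightarrow> y \<in> periodic_vectors \<Longrightarrow> norm (y - T h y) \<le> \<eta> * norm y"
proof -
  have "((\<lambda>t. Limsup (at_right 0) (\<lambda>h. ereal (norm (T t o\<^sub>L (id_blinfun - T h))))) \<longlongrightarrow> 0) at_top"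
    using assms(1,2) unfolding norm_continuous_at_infinity_def zero_ereal_def by auto
  then have "eventually (\<lambda>t. Limsup (at_right 0) (\<lambda>h. ereal (norm (T t o\<^sub>L (id_blinfun - T h))))
      < ereal \<eta>) at_top"
    using \<eta> by (intro order_tendstoD(2)) auto
  then obtain t0 where t0: "\<And>t. t0 \<le> t
      \<Longrightarrow> Limsup (at_right 0) (\<lambda>h. ereal (norm (T t o\<^sub>L (id_blinfun - T h)))) < ereal \<eta>"
    unfolding eventually_at_top_linorder by blast
  obtain m :: nat where "t0 / p < real m" using reals_Archimedean2 by blast
  then have "t0 \<le> real m * p" using period_pos by (simp add: field_simps)
  then have "eventually (\<lambda>h. ereal (norm (T (real m * p) o\<^sub>L (id_blinfun - T h))) < ereal \<eta>)
      (at_right 0)"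
    by (intro Limsup_lessD t0)
  then obtain \<delta> where \<delta>: "0 < \<delta>"
    "\<And>h. 0 < h \<Longrightarrow> h < \<delta> \<Longrightarrow> norm (T (real m * p) o\<^sub>L (id_blinfun - T h)) < \<eta>"
    unfolding eventually_at_right_field by auto
  show ?thesis
  proof (rule that[OF \<delta>(1)])
    fix h y assume h: "0 < h" "h < \<delta>" and y: "y \<in> periodic_vectors"
    have "(T (real m * p) o\<^sub>L (id_blinfun - T h)) y = y - T h y"
      using T_multiple_period[OF y] T_multiple_period[OF T_in_periodic_vectors[OF y]] h
      by (simp add: blinfun.diff_left blinfun.diff_right)
    then have "norm (y - T h y) \<le> norm (T (real m * p) o\<^sub>L (id_blinfun - T h)) * norm y"
      by (metis norm_blinfun)
    also have "\<dots> \<le> \<eta> * norm y"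
      using \<delta>(2)[OF h] by (intro mult_right_mono) auto
    finally show "norm (y - T h y) \<le> \<eta> * norm y" .
  qed
qed

lemma diff_prod_periodic_preimage:
  assumes "norm_continuous_at_infinity T" and t: "\<forall>i\<in>set L. 0 \<le> t i"
    and y: "diff_prod t L x \<in> periodic_vectors"
  shows "\<exists>z\<in>periodic_vectors. diff_prod t L z = diff_prod t L x"
proof (cases "growth_bound T < 0")
  case True
  then have "diff_prod t L x = 0" using periodic_vector_eq_0_if_growth_bound_neg y by blast
  then show ?thesis
    using subspace_0[OF subspace_periodic_vectors] by (intro bexI[of _ 0]) simp_all
next
  case False
  then have "growth_bound T = 0" using growth_bound_le_0 by simp
  moreover have "M * (1 / (M + 1)) < 1" using bound_nonneg by (simp add: field_simps)
  moreover have "0 < 1 / (M + 1)" using bound_nonneg by simp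
  ultimately obtain K where "\<And>k y. K < k \<Longrightarrow> y \<in> periodic_vectors \<Longrightarrow> harmonic k y = 0"
    using periodic_vectors_near_identity[OF assms(1)] high_harmonics_vanish by metis
  then show ?thesis using diff_prod_periodic_preimage_of_finite_harmonics t y by blast
qed

end

lemma (in bounded_C0_semigroup) ker_diff_prod_snoc:
  assumes nc: "norm_continuous_at_infinity T" and t: "\<forall>i\<in>set L. 0 \<le> t i" "0 \<le> t j"
  shows "ker (diff_prod t (L @ [j])) = ker (diff_prod t L) + ker (T (t j) - id_blinfun)"
proof (intro equalityI subsetI)
  fix x assume "x \<in> ker (diff_prod t (L @ [j]))"
  then have fixed: "T (t j) (diff_prod t L x) = diff_prod t L x"
    unfolding ker_def diff_prod_snoc
    by (simp add: blinfun.diff_right diff_prod_commute[OF t])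
  obtain z where z: "T (t j) z = z" "diff_prod t L z = diff_prod t L x"
  proof (cases "t j = 0")
    case True
    then show ?thesis using that[of x] by simp
  next
    case False
    interpret periodic_C0_semigroup T M "t j"
      using t(2) False by unfold_locales simp
    show ?thesis
      using diff_prod_periodic_preimage[OF nc t(1)] fixed that
      unfolding periodic_vectors_def by blast
  qed
  have "x - z \<in> ker (diff_prod t L)" "z \<in> ker (T (t j) - id_blinfun)"
    using z unfolding ker_def by (simp_all add: blinfun.diff_right blinfun.diff_left)
  then show "x \<in> ker (diff_prod t L) + ker (T (t j) - id_blinfun)"
    using set_plus_intro by fastforce
next
  fix x assume "x \<in> ker (diff_prod t L) + ker (T (t j) - id_blinfun)"
  then obtain a b where "x = a + b" "diff_prod t L a = 0" "T (t j) b - b = 0"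
    unfolding ker_def by (auto elim!: set_plus_elim simp: blinfun.diff_left)
  then have "diff_prod t L (T (t j) x - x) = T (t j) (diff_prod t L a) - diff_prod t L a"
    by (simp add: blinfun.add_right blinfun.diff_right diff_prod_commute[OF t] algebra_simps)
  then show "x \<in> ker (diff_prod t (L @ [j]))"
    unfolding ker_def diff_prod_snoc using \<open>diff_prod t L a = 0\<close> by simp
qed

theorem theorem2p14:
  fixes T :: "real \<Rightarrow> ('a::banach \<Rightarrow>\<^sub>L 'a)"
    and n :: nat and t :: "nat \<Rightarrow> real"
  assumes "C0_semigroup T"
    and "bounded_semigroup T"
    and "norm_continuous_at_infinity T"
    and "\<forall>i<n. 0 \<le> t i"
  shows "ker (foldr (\<lambda>i A. (T (t i) - id_blinfun) o\<^sub>L A) [0..<n] id_blinfun)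
         = (\<Sum>i<n. ker (T (t i) - id_blinfun))"
proof -
  obtain M where "\<forall>t\<ge>0. norm (T t) \<le> M"
    using assms(2) unfolding bounded_semigroup_def by blast
  then interpret bounded_C0_semigroup T M
    using assms(1) by unfold_locales auto
  have "ker (diff_prod t [0..<n]) = (\<Sum>i<n. ker (T (t i) - id_blinfun))"
    using assms(4)
  proof (induction n)
    case 0
    show ?case unfolding ker_def by auto
  next
    case (Suc n)
    then show ?case
      by (simp add: ker_diff_prod_snoc[OF assms(3)] sum.lessThan_Suc)
  qed
  then show ?thesis unfolding diff_prod_def .
qed

end
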